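(* For every positive integer $n$, \[ \sum_{j=1}^{n}\left(\binom{n}{j}-1\right)\frac{B_j}{j}\left(1-2^{-j}\right)=\frac{1-2^{n-1}}{2^n}. \]
   Context: $B_j$ is the $j$th Bernoulli number ($\frac{t}{e^t-1}=\sum_{m\ge0}B_m\frac{t^m}{m!}$, so $B_1=-1/2$). *)

theory Defs
  imports Complex_Main "HOL-Computational_Algebra.Formal_Power_Series"
begin

text \<open>Bernoulli numbers via the exponential generating function
  t/(e^t - 1) = sum_m B_m t^m / m!, so that B_1 = -1/2.\<close>
definition bernoulli :: "nat \<Rightarrow> real" where
  "bernoulli m = fact m * fps_nth (fps_X / (fps_exp 1 - 1)) m"

end

(* Write S(n) for the left-hand side and c(j) = B_j/j (1 - 2^-j). By Pascal's rule
   S(n+1) = S(n) + sum_{k<n} C(n,k) c(k+1), and since C(n,k)/(k+1) = C(n+1,k+1)/(n+1) the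
   increment is (1/(n+1)) sum_{j<=n} C(n+1,j) B_j (1 - 2^-j). Faulhaber's formula
   sum_{j<m} C(m,j) B_j k^(m-j) = m sum_{i<k} i^(m-1), taken at k = 1 and k = 2, gives
   sum_{j<m} C(m,j) B_j = 0 and sum_{j<m} C(m,j) B_j 2^-j = m/2^m for m >= 2, so the
   increment is -1/2^(n+1), and the claim follows by induction from S(1) = 0. *)
theory Submission
  imports Defs
begin

unbundle fps_syntax

lemma sum_binomial_minus_one_Suc:
  fixes c :: "nat \<Rightarrow> 'a::comm_ring_1"
  shows "(\<Sum>j=1..Suc n. (of_nat (Suc n choose j) - 1) * c j)
       = (\<Sum>j=1..n. (of_nat (n choose j) - 1) * c j) + (\<Sum>k<n. of_nat (n choose k) * c (Suc k))"
  by (simp add: sum.atLeast1_atMost_eq algebra_simps sum.distrib sum_subtractf)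

definition bernoulli_egf :: "real fps" where
  "bernoulli_egf = fps_X / (fps_exp 1 - 1)"

lemma bernoulli_eq_fact_times_egf_nth: "bernoulli m = fact m * bernoulli_egf $ m"
  unfolding bernoulli_def bernoulli_egf_def by simp

lemma bernoulli_egf_times_exp_minus_one: "bernoulli_egf * (fps_exp 1 - 1) = fps_X"
proof -
  have "subdegree (fps_exp (1::real) - 1) = 1"
    by (rule subdegreeI) auto
  moreover have "fps_exp (1::real) - 1 \<noteq> 0"
  proof
    assume "fps_exp (1::real) - 1 = 0"
    then have "(fps_exp (1::real) - 1) $ 1 = 0" by simp
    then show False by simp
  qed
  ultimately show ?thesis
    unfolding bernoulli_egf_def by (intro fps_times_divide_eq) auto
qed

lemma fact_times_bernoulli_egf_times_exp_nth:
  "fact m * (bernoulli_egf * fps_exp a) $ m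
     = (\<Sum>j\<le>m. real (m choose j) * bernoulli j * a ^ (m - j))"
proof -
  have "fact m * (bernoulli_egf * fps_exp a) $ m
      = (\<Sum>j=0..m. fact m * (bernoulli_egf $ j * (a ^ (m - j) / fact (m - j))))"
    by (simp add: fps_mult_nth sum_distrib_left)
  also have "\<dots> = (\<Sum>j\<le>m. real (m choose j) * bernoulli j * a ^ (m - j))"
    by (rule sum.cong)
      (auto simp: bernoulli_eq_fact_times_egf_nth binomial_fact field_simps atLeast0AtMost)
  finally show ?thesis .
qed

text \<open>Since e^(kt) - 1 = (e^t - 1)(1 + e^t + ... + e^((k-1)t)),
  the generating function times e^(kt) - 1 is t times a sum of exponentials.\<close>
lemma faulhaber_bernoulli:
  assumes "m \<ge> 1"
  shows "(\<Sum>j<m. real (m choose j) * bernoulli j * real k ^ (m - j))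
         = real m * (\<Sum>i<k. real i ^ (m - 1))"
proof -
  have "bernoulli_egf * (fps_exp (real k) - 1)
      = bernoulli_egf * (fps_exp 1 - 1) * (\<Sum>i<k. fps_exp 1 ^ i)"
    using fps_exp_power_mult[of "1::real" k] power_diff_1_eq[of "fps_exp (1::real)" k]
    by (simp add: mult.assoc)
  also have "\<dots> = fps_X * (\<Sum>i<k. fps_exp (real i))"
    by (simp add: bernoulli_egf_times_exp_minus_one fps_exp_power_mult)
  finally have "(bernoulli_egf * (fps_exp (real k) - 1)) $ m
      = (\<Sum>i<k. real i ^ (m - 1) / fact (m - 1))"
    using assms by (simp add: fps_X_mult_nth fps_sum_nth)
  then have "(bernoulli_egf * fps_exp (real k)) $ m - bernoulli_egf $ m
      = (\<Sum>i<k. real i ^ (m - 1) / fact (m - 1))"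
    by (simp add: right_diff_distrib)
  then have "fact m * (bernoulli_egf * fps_exp (real k)) $ m - bernoulli m
      = fact m / fact (m - 1) * (\<Sum>i<k. real i ^ (m - 1))"
    by (simp add: bernoulli_eq_fact_times_egf_nth algebra_simps sum_divide_distrib
        sum_distrib_left)
  also have "fact m / fact (m - 1) = (real m :: real)"
    using assms fact_reduce[of m] by (simp add: field_simps)
  finally show ?thesis
    by (simp add: fact_times_bernoulli_egf_times_exp_nth lessThan_Suc_atMost[symmetric])
qed

lemma sum_binomial_bernoulli_one_minus_inverse_pow2:
  assumes "m \<ge> 2"
  shows "(\<Sum>j<m. real (m choose j) * bernoulli j * (1 - 1 / 2 ^ j)) = - real m / 2 ^ m"
proof -
  have sum_one: "(\<Sum>j<m. real (m choose j) * bernoulli j) = 0"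
    using faulhaber_bernoulli[of m 1] assms by simp
  have "(\<Sum>j<m. real (m choose j) * bernoulli j / 2 ^ j)
      = (\<Sum>j<m. real (m choose j) * bernoulli j * 2 ^ (m - j)) / 2 ^ m"
    unfolding sum_divide_distrib
    by (rule sum.cong) (auto simp: field_simps power_add[symmetric])
  also have "\<dots> = real m / 2 ^ m"
    using faulhaber_bernoulli[of m 2] assms by (simp add: numeral_2_eq_2)
  finally have sum_half: "(\<Sum>j<m. real (m choose j) * bernoulli j / 2 ^ j) = real m / 2 ^ m" .
  have "(\<Sum>j<m. real (m choose j) * bernoulli j * (1 - 1 / 2 ^ j))
      = (\<Sum>j<m. real (m choose j) * bernoulli j) - (\<Sum>j<m. real (m choose j) * bernoulli j / 2 ^ j)"
    by (simp add: right_diff_distrib sum_subtractf)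
  then show ?thesis
    using sum_one sum_half by simp
qed

lemma sum_binomial_bernoulli_Suc_over_Suc:
  assumes "n \<ge> 1"
  shows "(\<Sum>k<n. real (n choose k) * (bernoulli (Suc k) / real (Suc k) * (1 - 1 / 2 ^ Suc k)))
         = - 1 / 2 ^ Suc n"
proof -
  have summand: "real (n choose k) * (bernoulli (Suc k) / real (Suc k) * (1 - 1 / 2 ^ Suc k))
      = real (Suc n choose Suc k) * bernoulli (Suc k) * (1 - 1 / 2 ^ Suc k) / real (Suc n)" for k
  proof -
    have "real (Suc k) * real (Suc n choose Suc k) = real (Suc n) * real (n choose k)"
      by (metis Suc_times_binomial of_nat_mult)
    then have binomial: "real (Suc n choose Suc k) = real (Suc n) * real (n choose k) / real (Suc k)"
      by (simp add: field_simps del: binomial_Suc_Suc of_nat_Suc)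
    show ?thesis
      unfolding binomial by (simp del: of_nat_Suc)
  qed
  have "(\<Sum>k<n. real (n choose k) * (bernoulli (Suc k) / real (Suc k) * (1 - 1 / 2 ^ Suc k)))
      = (\<Sum>k<n. real (Suc n choose Suc k) * bernoulli (Suc k) * (1 - 1 / 2 ^ Suc k)) / real (Suc n)"
    unfolding sum_divide_distrib by (rule sum.cong[OF refl]) (rule summand)
  also have "(\<Sum>k<n. real (Suc n choose Suc k) * bernoulli (Suc k) * (1 - 1 / 2 ^ Suc k))
      = (\<Sum>j<Suc n. real (Suc n choose j) * bernoulli j * (1 - 1 / 2 ^ j))"
    by (simp only: sum.lessThan_Suc_shift) simp
  also have "\<dots> = - real (Suc n) / 2 ^ Suc n"
    using assms by (intro sum_binomial_bernoulli_one_minus_inverse_pow2) simp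
  finally show ?thesis
    by (simp del: of_nat_Suc)
qed

theorem mainTheorem7:
  fixes n :: nat
  assumes "n \<ge> 1"
  shows "(\<Sum>j=1..n. (real (n choose j) - 1) * (bernoulli j / real j) * (1 - 2 powi (- int j)))
         = (1 - 2 ^ (n - 1)) / 2 ^ n"
  using assms
proof (induction n rule: dec_induct)
  case base
  show ?case by simp
next
  case (step n)
  define c where "c j = bernoulli j / real j * (1 - 1 / 2 ^ j)" for j
  have "(\<Sum>j=1..Suc n. (real (Suc n choose j) - 1) * (bernoulli j / real j) * (1 - 2 powi (- int j)))
      = (\<Sum>j=1..n. (real (n choose j) - 1) * c j) + (\<Sum>k<n. real (n choose k) * c (Suc k))"
    using sum_binomial_minus_one_Suc[of n c] by (simp add: c_def mult.assoc power_int_minus_divide)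
  also have "\<dots> = (1 - 2 ^ (n - 1)) / 2 ^ n - 1 / 2 ^ Suc n"
    using step sum_binomial_bernoulli_Suc_over_Suc by (simp add: c_def mult.assoc power_int_minus_divide)
  also have "\<dots> = (1 - 2 ^ (Suc n - 1)) / 2 ^ Suc n"
    using \<open>n \<ge> 1\<close> by (cases n) (simp_all add: field_simps)
  finally show ?case .
qed

end
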